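(* For all natural numbers $0\le i<k$, the game language $W_{i,k}$ satisfies $\mu(W_{i,k})=0$ if $k$ is odd and $\mu(W_{i,k})=1$ if $k$ is even.
   Context: The full binary tree is $V=\{L,R\}^*$ (root $\epsilon$). For a finite alphabet $\Sigma$, a $\Sigma$-tree is a map $t:V\to\Sigma$, $\mathcal{T}_\Sigma=\Sigma^V$, and $\mu$ is the coin-flipping (uniform product) probability measure on $\mathcal{T}_\Sigma$: $\mu(\{t : t(v_1)=a_1,\dots,t(v_m)=a_m\})=|\Sigma|^{-m}$ for pairwise distinct $v_j$. For $i<k$ let $\Sigma_{i,k}=\{\forall,\exists\}\times\{i,i+1,\dots,k\}$. The language $W_{i,k}\subseteq\mathcal{T}_{\Sigma_{i,k}}$ is the set of trees accepted by the automaton $\mathcal{A}_{i,k}$ with states $q_i,\dots,q_k$, initial state $q_i$, priorities $\pi(q_j)=j$, and transitions $\delta(q_j,(\exists,m))=(L,q_m)\vee(R,q_m)$ and $\delta(q_j,(\forall,m))=(L,q_m)\wedge(R,q_m)$ for all $j,m\in\{i,\dots,k\}$. Acceptance of $t$: player $\exists$ wins the game starting at $\langle\epsilon,q_i\rangle$ in which from $\langle x,q\rangle$ the game moves to $\langle x,\delta(q,t(x))\rangle$; at a disjunction $\exists$ chooses a disjunct, at a conjunction $\forall$ chooses a conjunct; $\langle x,(D,q)\rangle$ moves to $\langle xD,q\rangle$ for $D\in\{L,R\}$; an infinite play is won by $\exists$ iff the largest priority among states visited infinitely often is even. (Equivalently: at each vertex labeled $(P,m)$ player $P$ chooses the next child,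 and $\exists$ wins an infinite path iff the largest number $m$ appearing infinitely often in the labels along it is even.) *)

theory Defs
  imports "HOL-Probability.Probability"
begin

text \<open>Vertices of the full binary tree: words over {L,R}; L = False, R = True.
  The child xD of x is x @ [D].\<close>
type_synonym vertex = "bool list"

datatype player = PAll | PEx

definition Sigma_ik :: "nat \<Rightarrow> nat \<Rightarrow> (player \<times> nat) set" where
  "Sigma_ik i k = UNIV \<times> {i..k}"

definition coin_measure :: "(player \<times> nat) set \<Rightarrow> (vertex \<Rightarrow> player \<times> nat) measure" where
  "coin_measure S = PiM UNIV (\<lambda>_. uniform_count_measure S)"

definition path_vertex :: "(nat \<Rightarrow> bool) \<Rightarrow> nat \<Rightarrow> vertex" where
  "path_vertex p n = map p [0..<n]"

text \<open>Strategies are positional (the history is determined by the current vertex):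
  sigma x is the chosen direction at vertex x.\<close>
definition consistent :: "(vertex \<Rightarrow> player \<times> nat) \<Rightarrow> (vertex \<Rightarrow> bool) \<Rightarrow> (nat \<Rightarrow> bool) \<Rightarrow> bool" where
  "consistent t \<sigma> p \<longleftrightarrow>
     (\<forall>n. fst (t (path_vertex p n)) = PEx \<longrightarrow> p n = \<sigma> (path_vertex p n))"

text \<open>The states visited are q_i at the root and then q_m where m is the label number of the
  parent vertex; so the priorities seen infinitely often are the label numbers seen
  infinitely often.\<close>
definition parity_win :: "(vertex \<Rightarrow> player \<times> nat) \<Rightarrow> (nat \<Rightarrow> bool) \<Rightarrow> bool" where
  "parity_win t p \<longleftrightarrow>
     even (Max {m. \<exists>\<^sub>\<infinity> n. snd (t (path_vertex p n)) = m})"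

definition W :: "nat \<Rightarrow> nat \<Rightarrow> (vertex \<Rightarrow> player \<times> nat) set" where
  "W i k = {t. (\<forall>x. t x \<in> Sigma_ik i k) \<and>
              (\<exists>\<sigma>. \<forall>p. consistent t \<sigma> p \<longrightarrow> parity_win t p)}"

end

theory Submission
  imports Defs
begin

text \<open>Each vertex independently carries the top priority \<open>k\<close> with probability \<open>1/(k - i + 1)\<close>.
  Hence the probability that a player cannot force a visit to a \<open>k\<close>-labelled vertex within \<open>n\<close>
  steps from a given vertex is \<open>((k - i)/(k - i + 1))^n\<close>, and almost surely both players can force
  such a visit from every vertex.  Then the player for whom the parity of \<open>k\<close> is winning plays this
  attractor strategy: \<open>k\<close> is met infinitely often whatever the opponent does, and being the
  largest priority it decides the play.\<close>

lemma UNIV_player: "(UNIV :: player set) = {PAll, PEx}"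
  using player.exhaust by auto

lemma path_vertex_Suc: "path_vertex p (Suc n) = path_vertex p n @ [p n]"
  by (simp add: path_vertex_def)

fun forces_within :: "player \<Rightarrow> nat \<Rightarrow> (vertex \<Rightarrow> player \<times> nat) \<Rightarrow> nat \<Rightarrow> vertex \<Rightarrow> bool" where
  "forces_within P k t 0 x \<longleftrightarrow> False"
| "forces_within P k t (Suc n) x \<longleftrightarrow> snd (t x) = k \<or>
     (if fst (t x) = P then forces_within P k t n (x @ [False]) \<or> forces_within P k t n (x @ [True])
      else forces_within P k t n (x @ [False]) \<and> forces_within P k t n (x @ [True]))"

lemma forces_within_cong:
  assumes "\<And>w. t (y @ w) = t' (y @ w)"
  shows "forces_within P k t n y = forces_within P k t' n y"
  using assms
proof (induction n arbitrary: y)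
  case 0
  then show ?case by simp
next
  case (Suc n)
  have "t y = t' y"
    using Suc.prems[of "[]"] by simp
  moreover have "forces_within P k t n (y @ [b]) = forces_within P k t' n (y @ [b])" for b
    by (rule Suc.IH) (metis Suc.prems append.assoc append_Cons append_Nil)
  ultimately show ?case by simp
qed

lemma forces_within_Suc_child:
  assumes "forces_within P k t (Suc n) x" "snd (t x) \<noteq> k"
    and "fst (t x) = P \<Longrightarrow> b \<longleftrightarrow> \<not> forces_within P k t n (x @ [False])"
  shows "forces_within P k t n (x @ [b])"
  using assms by (cases b) (auto split: if_splits)

section \<open>Attractor strategies\<close>

definition follows :: "player \<Rightarrow> (vertex \<Rightarrow> player \<times> nat) \<Rightarrow> (vertex \<Rightarrow> bool) \<Rightarrow> (nat \<Rightarrow> bool) \<Rightarrow> bool" where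
  "follows P t \<tau> p \<longleftrightarrow> (\<forall>n. fst (t (path_vertex p n)) = P \<longrightarrow> p n = \<tau> (path_vertex p n))"

lemma consistent_eq_follows: "consistent t = follows PEx t"
  by (simp add: fun_eq_iff consistent_def follows_def)

lemma exists_path_following:
  obtains p where "\<And>n. p n = d (path_vertex p n)"
proof -
  define v where "v = rec_nat [] (\<lambda>_ u. u @ [d u])"
  define p where "p n = d (v n)" for n
  have "path_vertex p n = v n" for n
    by (induction n) (simp_all add: path_vertex_def v_def p_def)
  then show thesis
    by (intro that[of p]) (simp add: p_def)
qed

text \<open>The strategy moves towards a child from which \<open>k\<close> can be forced in fewer steps, so the least
  number of steps needed decreases along the play until a \<open>k\<close>-labelled vertex is reached.\<close>

lemma forcing_strategy:
  assumes "\<And>x. \<exists>n. forces_within P k t n x"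
  obtains \<tau> where "\<And>p. follows P t \<tau> p \<Longrightarrow> \<exists>\<^sub>\<infinity>m. snd (t (path_vertex p m)) = k"
proof -
  define r where "r x = (LEAST n. forces_within P k t n x)" for x
  define \<tau> where "\<tau> x \<longleftrightarrow> \<not> forces_within P k t (r x - 1) (x @ [False])" for x
  have forces_r: "forces_within P k t (r x) x" for x
    unfolding r_def using assms by (rule LeastI_ex)
  have r_le: "forces_within P k t n x \<Longrightarrow> r x \<le> n" for n x
    unfolding r_def by (rule Least_le)
  have "\<exists>m'\<ge>m. snd (t (path_vertex p m')) = k"
    if p: "follows P t \<tau> p" and "r (path_vertex p m) \<le> N" for p m N
    using that(2)
  proof (induction N arbitrary: m)
    case 0
    then show ?case
      using forces_r[of "path_vertex p m"] by simp
  next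
    case (Suc N)
    let ?v = "path_vertex p m"
    show ?case
    proof (cases "snd (t ?v) = k")
      case True
      then show ?thesis by blast
    next
      case False
      obtain n where n: "r ?v = Suc n" "n \<le> N"
        using forces_r[of ?v] Suc.prems by (cases "r ?v") auto
      have "forces_within P k t n (?v @ [p m])"
        using forces_r[of ?v] False p
        by (intro forces_within_Suc_child) (auto simp: n follows_def \<tau>_def)
      then have "r (path_vertex p (Suc m)) \<le> N"
        using r_le n(2) by (fastforce simp: path_vertex_Suc)
      then obtain m' where "m' \<ge> Suc m" "snd (t (path_vertex p m')) = k"
        using Suc.IH by blast
      then show ?thesis
        by (intro exI[of _ m']) auto
    qed
  qed
  then show thesis
    by (intro that[of \<tau>]) (auto simp: INFM_nat_le)
qed

lemma parity_win_iff_even: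
  assumes labels: "\<And>x. t x \<in> Sigma_ik i k"
    and top: "\<exists>\<^sub>\<infinity>n. snd (t (path_vertex p n)) = k"
  shows "parity_win t p \<longleftrightarrow> even k"
proof -
  let ?R = "{m. \<exists>\<^sub>\<infinity>n. snd (t (path_vertex p n)) = m}"
  have "?R \<subseteq> {i..k}"
  proof
    fix m
    assume "m \<in> ?R"
    then obtain n where "snd (t (path_vertex p n)) = m"
      by (auto dest: INFM_EX)
    then show "m \<in> {i..k}"
      using labels[of "path_vertex p n"] by (auto simp: Sigma_ik_def)
  qed
  then have "Max ?R = k"
    using top by (intro Max_eqI) (auto intro: finite_subset)
  then show ?thesis
    by (simp add: parity_win_def)
qed

lemma mem_W_iff_even:
  assumes labels: "\<And>x. t x \<in> Sigma_ik i k"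
    and forcing: "\<And>P x. \<exists>n. forces_within P k t n x"
  shows "t \<in> W i k \<longleftrightarrow> even k"
proof
  assume "t \<in> W i k"
  then obtain \<sigma> where \<sigma>: "\<And>p. consistent t \<sigma> p \<Longrightarrow> parity_win t p"
    unfolding W_def by blast
  obtain \<tau> where \<tau>: "\<And>p. follows PAll t \<tau> p \<Longrightarrow> \<exists>\<^sub>\<infinity>m. snd (t (path_vertex p m)) = k"
    using forcing_strategy forcing by blast
  obtain p where p: "\<And>n. p n = (if fst (t (path_vertex p n)) = PEx then \<sigma> else \<tau>) (path_vertex p n)"
    using exists_path_following[of "\<lambda>v. (if fst (t v) = PEx then \<sigma> else \<tau>) v"] by blast
  have "consistent t \<sigma> p" "follows PAll t \<tau> p"
    using p by (auto simp: consistent_def follows_def)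
  then show "even k"
    using \<sigma> \<tau> parity_win_iff_even[of t i k p] labels by blast
next
  assume "even k"
  obtain \<tau> where \<tau>: "\<And>p. follows PEx t \<tau> p \<Longrightarrow> \<exists>\<^sub>\<infinity>m. snd (t (path_vertex p m)) = k"
    using forcing_strategy forcing by blast
  then have "\<forall>p. consistent t \<tau> p \<longrightarrow> parity_win t p"
    using parity_win_iff_even[of t i k] labels \<open>even k\<close> by (simp add: consistent_eq_follows)
  then show "t \<in> W i k"
    using labels unfolding W_def by blast
qed

section \<open>The coin-flipping measure\<close>

lemma space_coin_measure: "space (coin_measure S) = {t. \<forall>x. t x \<in> S}"
  by (auto simp: coin_measure_def space_PiM PiE_def Pi_def space_uniform_count_measure)

lemma prob_space_coin_measure: "finite S \<Longrightarrow> S \<noteq> {} \<Longrightarrow> prob_space (coin_measure S)"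
  unfolding coin_measure_def by (intro prob_space_PiM prob_space_uniform_count_measure)

lemma sets_PiM_label:
  "y \<in> K \<Longrightarrow> {s \<in> space (PiM K (\<lambda>_. uniform_count_measure S)). Q (s y)} \<in> sets (PiM K (\<lambda>_. uniform_count_measure S))"
  by (rule sets_Collect_single') (auto simp: sets_uniform_count_measure space_uniform_count_measure)

lemma sets_PiM_forces_within:
  fixes K :: "vertex set" and S :: "(player \<times> nat) set"
  defines "M \<equiv> PiM K (\<lambda>_. uniform_count_measure S)"
  assumes "\<And>w. y @ w \<in> K"
  shows "{s \<in> space M. forces_within P k s n y} \<in> sets M"
    and "{s \<in> space M. \<not> forces_within P k s n y} \<in> sets M"
proof -
  show forces: "{s \<in> space M. forces_within P k s n y} \<in> sets M"
    using assms(2)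
  proof (induction n arbitrary: y)
    case 0
    then show ?case by simp
  next
    case (Suc n)
    have child: "{s \<in> space M. forces_within P k s n (y @ [b])} \<in> sets M" for b
      by (rule Suc.IH) (metis Suc.prems append.assoc append_Cons append_Nil)
    have "{s \<in> space M. forces_within P k s (Suc n) y} =
       {s \<in> space M. snd (s y) = k} \<union>
       ({s \<in> space M. fst (s y) = P} \<inter>
          ({s \<in> space M. forces_within P k s n (y @ [False])} \<union> {s \<in> space M. forces_within P k s n (y @ [True])})) \<union>
       ({s \<in> space M. fst (s y) \<noteq> P} \<inter>
          ({s \<in> space M. forces_within P k s n (y @ [False])} \<inter> {s \<in> space M. forces_within P k s n (y @ [True])}))"
      by auto
    also have "\<dots> \<in> sets M"
      using Suc.prems[of "[]"] unfolding M_def by (intro sets.Un sets.Int child[unfolded M_def] sets_PiM_label) simp_all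
    finally show ?case .
  qed
  have "{s \<in> space M. \<not> forces_within P k s n y} = space M - {s \<in> space M. forces_within P k s n y}"
    by blast
  then show "{s \<in> space M. \<not> forces_within P k s n y} \<in> sets M"
    using forces by auto
qed

lemma sets_coin_label: "{t \<in> space (coin_measure S). t x \<in> A} \<in> sets (coin_measure S)"
  unfolding coin_measure_def by (rule sets_PiM_label) simp

lemma sets_coin_not_forces_within:
  "{t \<in> space (coin_measure S). \<not> forces_within P k t n x} \<in> sets (coin_measure S)"
  unfolding coin_measure_def by (rule sets_PiM_forces_within(2)) simp

lemma indep_vars_coin_coordinates:
  assumes "finite S" "S \<noteq> {}"
  shows "prob_space.indep_vars (coin_measure S) (\<lambda>_. uniform_count_measure S) (\<lambda>x t. t x) UNIV"
proof -
  interpret uniform: prob_space "uniform_count_measure S"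
    using assms by (rule prob_space_uniform_count_measure)
  interpret product_prob_space "\<lambda>_::vertex. uniform_count_measure S" UNIV ..
  interpret prob_space "coin_measure S"
    using assms by (rule prob_space_coin_measure)
  have coordinate: "(\<lambda>t. t x) \<in> measurable (coin_measure S) (uniform_count_measure S)" for x
    unfolding coin_measure_def by (rule measurable_component_singleton) simp
  have "distr (coin_measure S) (PiM UNIV (\<lambda>_. uniform_count_measure S)) (\<lambda>t. \<lambda>x\<in>UNIV. t x) =
      PiM UNIV (\<lambda>x. distr (coin_measure S) (uniform_count_measure S) (\<lambda>t. t x))"
    unfolding coin_measure_def by (simp add: PiM_component) (simp add: restrict_def distr_id)
  then show ?thesis
    by (subst indep_vars_iff_distr_eq_PiM[OF _ coordinate]) simp_all
qed

lemma prob_coin_label: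
  assumes "finite S" "S \<noteq> {}" "A \<subseteq> S"
  shows "measure (coin_measure S) {t \<in> space (coin_measure S). t x \<in> A} = card A / card S"
proof -
  interpret uniform: prob_space "uniform_count_measure S"
    using assms(1,2) by (rule prob_space_uniform_count_measure)
  interpret product_prob_space "\<lambda>_::vertex. uniform_count_measure S" UNIV ..
  have "emeasure (coin_measure S) {t \<in> space (coin_measure S). t x \<in> A} = emeasure (uniform_count_measure S) A"
    unfolding coin_measure_def
    by (rule emeasure_PiM_Collect_single) (use assms(3) in \<open>simp_all add: sets_uniform_count_measure\<close>)
  then show ?thesis
    using assms by (simp add: measure_def measure_uniform_count_measure[symmetric])
qed

text \<open>The label of \<open>x\<close> and the two subtrees below \<open>x\<close> occupy disjoint sets of coordinates.\<close>

lemma indep_events_label_subtrees: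
  assumes "finite S" "S \<noteq> {}"
  shows "prob_space.indep_events (coin_measure S)
    (\<lambda>j. case j of None \<Rightarrow> {t \<in> space (coin_measure S). t x \<in> A}
                 | Some b \<Rightarrow> {t \<in> space (coin_measure S). \<not> forces_within P k t n (x @ [b])}) UNIV"
    (is "prob_space.indep_events _ ?E _")
proof -
  interpret prob_space "coin_measure S"
    using assms by (rule prob_space_coin_measure)
  define K where "K j = (case j of None \<Rightarrow> {x} | Some b \<Rightarrow> range (\<lambda>w. x @ b # w))" for j
  define Q where "Q j s \<longleftrightarrow> (case j of None \<Rightarrow> s x \<in> A | Some b \<Rightarrow> \<not> forces_within P k s n (x @ [b]))"
    for j and s :: "vertex \<Rightarrow> player \<times> nat"
  have "indep_vars (\<lambda>j. PiM (K j) (\<lambda>_. uniform_count_measure S)) (\<lambda>j t. restrict t (K j)) UNIV"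
    by (rule indep_vars_restrict[OF indep_vars_coin_coordinates[OF assms]])
      (auto simp: K_def disjoint_family_on_def split: option.splits)
  then have "indep_events (\<lambda>j. {t \<in> space (coin_measure S). Q j (restrict t (K j))}) UNIV"
  proof (rule indep_eventsI_indep_vars)
    fix j :: "bool option"
    show "{s \<in> space (PiM (K j) (\<lambda>_. uniform_count_measure S)). Q j s} \<in> sets (PiM (K j) (\<lambda>_. uniform_count_measure S))"
      by (cases j) (auto simp: K_def Q_def intro!: sets_PiM_label sets_PiM_forces_within)
  qed
  moreover have "{t \<in> space (coin_measure S). Q j (restrict t (K j))} = ?E j" for j
  proof (cases j)
    case (Some b)
    have "forces_within P k (restrict t (K j)) n (x @ [b]) = forces_within P k t n (x @ [b])" for t
      by (rule forces_within_cong) (simp add: K_def Some)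
    then show ?thesis
      by (simp add: Q_def Some)
  qed (simp add: Q_def K_def)
  ultimately show ?thesis
    by simp
qed

lemma (in prob_space) prob_indep_events_option:
  assumes "indep_events (case_option E F) UNIV"
  shows "prob (E \<inter> F False \<inter> F True) = prob E * prob (F False) * prob (F True)"
    and "prob (E \<inter> (F False \<union> F True)) =
      prob E * (prob (F False) + prob (F True) - prob (F False) * prob (F True))"
proof -
  have "range (case_option E F) \<subseteq> events"
    using assms by (simp add: indep_events_def)
  then have "case_option E F None \<in> events" "case_option E F (Some b) \<in> events" for b
    by blast+
  then have events: "E \<in> events" "F b \<in> events" for b
    by simp_all
  have product: "prob (\<Inter>j\<in>J. case_option E F j) = (\<Prod>j\<in>J. prob (case_option E F j))"
    if "J \<noteq> {}" for J
    using assms that by (auto simp: indep_events_def)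
  show three: "prob (E \<inter> F False \<inter> F True) = prob E * prob (F False) * prob (F True)"
    using product[of "{None, Some False, Some True}"] by (simp add: Int_ac mult_ac)
  have "prob (E \<inter> (F False \<union> F True)) =
      prob (E \<inter> F False) + prob (E \<inter> F True) - prob (E \<inter> F False \<inter> F True)"
    unfolding Int_Un_distrib
    by (subst measure_Un3) (use events in \<open>auto simp: fmeasurable_eq_sets Int_ac intro!: arg_cong[where f=prob]\<close>)
  also have "\<dots> = prob E * (prob (F False) + prob (F True) - prob (F False) * prob (F True))"
    using product[of "{None, Some False}"] product[of "{None, Some True}"] three
    by (simp add: algebra_simps)
  finally show "prob (E \<inter> (F False \<union> F True)) =
      prob E * (prob (F False) + prob (F True) - prob (F False) * prob (F True))" .
qed

lemma (in prob_space) completion_AE_iff_const: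
  assumes "A \<subseteq> space M" and "AE x in M. x \<in> A \<longleftrightarrow> b"
  shows "A \<in> sets (completion M) \<and> emeasure (completion M) A = (if b then 1 else 0)"
proof (cases b)
  case True
  then have AE: "AE x in M. x \<in> A"
    using assms(2) by simp
  then have "space M - A \<in> sets (completion M)"
    using sets_completion_AE[of "\<lambda>x. x \<notin> A"] by (simp add: pred_def set_diff_eq)
  then have "space (completion M) - (space M - A) \<in> sets (completion M)"
    by (rule sets.compl_sets)
  then have A: "A \<in> sets (completion M)"
    using assms(1) by (simp add: double_diff)
  interpret completion: prob_space "completion M"
    by (rule prob_space_completion)
  have "emeasure (completion M) A = 1"
    by (rule completion.emeasure_eq_1_AE[OF A AE_completion[OF AE]])
  with A True show ?thesis
    by simp
next
  case False
  then have "AE x in M. x \<notin> A"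
    using assms(2) by simp
  then obtain N where "{x \<in> space M. \<not> x \<notin> A} \<subseteq> N" "emeasure M N = 0" "N \<in> sets M"
    by (rule AE_E)
  then have "A \<in> null_sets (completion M)"
    using assms(1) null_sets_completion_iff2 by blast
  then show ?thesis
    using False by auto
qed

section \<open>Forcing the top priority\<close>

lemma finite_Sigma_ik: "finite (Sigma_ik i k)" and Sigma_ik_nonempty: "i \<le> k \<Longrightarrow> Sigma_ik i k \<noteq> {}"
  by (auto simp: Sigma_ik_def UNIV_player)

text \<open>Below a vertex not labelled \<open>k\<close>, \<open>P\<close> fails if both subtrees fail when it owns the vertex and if
  either fails otherwise; with probability \<open>q\<close> for each subtree this averages to \<open>q\<close>, so each
  step contributes the factor \<open>(k - i)/(k - i + 1)\<close> of a label other than \<open>k\<close>.\<close>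

lemma prob_not_forces_within:
  assumes "i < k"
  shows "measure (coin_measure (Sigma_ik i k)) {t \<in> space (coin_measure (Sigma_ik i k)). \<not> forces_within P k t n x}
    = (real (k - i) / real (k + 1 - i)) ^ n"
proof (induction n arbitrary: x)
  case 0
  interpret prob_space "coin_measure (Sigma_ik i k)"
    by (rule prob_space_coin_measure[OF finite_Sigma_ik Sigma_ik_nonempty]) (use assms in simp)
  show ?case
    by (simp add: prob_space)
next
  case (Suc n)
  define S where "S = Sigma_ik i k"
  have S: "finite S" "S \<noteq> {}"
    using assms finite_Sigma_ik Sigma_ik_nonempty[of i k] by (simp_all add: S_def)
  interpret prob_space "coin_measure S"
    using S by (rule prob_space_coin_measure)
  define h where "h = real (k - i) / (2 * real (k + 1 - i))"
  define q where "q = (real (k - i) / real (k + 1 - i)) ^ n"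
  define own where "own = {P} \<times> {i..<k}"
  define opp where "opp = (UNIV - {P}) \<times> {i..<k}"
  let ?E = "\<lambda>A. {t \<in> space (coin_measure S). t x \<in> A}"
  let ?F = "\<lambda>b. {t \<in> space (coin_measure S). \<not> forces_within P k t n (x @ [b])}"
  have "card (UNIV - {P}) = 1"
    by (cases P) (auto simp: UNIV_player)
  then have "card own = k - i" "card opp = k - i" "card S = 2 * (k + 1 - i)"
    by (simp_all add: own_def opp_def S_def Sigma_ik_def UNIV_player card_cartesian_product)
  moreover have "own \<subseteq> S" "opp \<subseteq> S"
    by (auto simp: own_def opp_def S_def Sigma_ik_def)
  ultimately have label: "prob (?E own) = h" "prob (?E opp) = h"
    using prob_coin_label[OF S, of own x] prob_coin_label[OF S, of opp x] by (simp_all add: h_def)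
  have events: "?E A \<in> events" "?F b \<in> events" for A b
    by (rule sets_coin_label sets_coin_not_forces_within)+
  have child: "prob (?F b) = q" for b
    using Suc.IH[of "x @ [b]"] by (simp add: S_def q_def)
  have "\<not> forces_within P k t (Suc n) x \<longleftrightarrow>
      t x \<in> own \<and> \<not> forces_within P k t n (x @ [False]) \<and> \<not> forces_within P k t n (x @ [True]) \<or>
      t x \<in> opp \<and> (\<not> forces_within P k t n (x @ [False]) \<or> \<not> forces_within P k t n (x @ [True]))"
    if "t \<in> space (coin_measure S)" for t
  proof -
    have "t x \<in> Sigma_ik i k"
      using that by (simp add: space_coin_measure S_def)
    then obtain pl m where "t x = (pl, m)" "m \<in> {i..k}"
      by (cases "t x") (auto simp: Sigma_ik_def)
    then show ?thesis
      by (auto simp: own_def opp_def)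
  qed
  then have fail_eq: "{t \<in> space (coin_measure S). \<not> forces_within P k t (Suc n) x} =
      (?E own \<inter> ?F False \<inter> ?F True) \<union> (?E opp \<inter> (?F False \<union> ?F True))"
    by blast
  have "prob {t \<in> space (coin_measure S). \<not> forces_within P k t (Suc n) x} =
      prob (?E own \<inter> ?F False \<inter> ?F True) + prob (?E opp \<inter> (?F False \<union> ?F True))"
    unfolding fail_eq by (rule finite_measure_Union) (use events in \<open>auto simp: own_def opp_def\<close>)
  also have "\<dots> = h * q * q + h * (q + q - q * q)"
    using prob_indep_events_option[OF indep_events_label_subtrees[OF S]] label child by simp
  also have "\<dots> = 2 * h * q"
    by (simp add: algebra_simps)
  also have "\<dots> = (real (k - i) / real (k + 1 - i)) ^ Suc n"
    by (simp add: h_def q_def)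
  finally show ?case
    by (simp add: S_def)
qed

lemma AE_forces_within:
  assumes "i < k"
  shows "AE t in coin_measure (Sigma_ik i k). \<forall>x. \<exists>n. forces_within P k t n x"
proof -
  let ?M = "coin_measure (Sigma_ik i k)"
  let ?c = "real (k - i) / real (k + 1 - i)"
  interpret prob_space ?M
    by (rule prob_space_coin_measure[OF finite_Sigma_ik Sigma_ik_nonempty]) (use assms in simp)
  have "{t \<in> space ?M. \<forall>n. \<not> forces_within P k t n x} \<in> null_sets ?M" for x
  proof -
    let ?Z = "{t \<in> space ?M. \<forall>n. \<not> forces_within P k t n x}"
    have "?Z = (\<Inter>n. {t \<in> space ?M. \<not> forces_within P k t n x})"
      by blast
    also have "\<dots> \<in> events"
      by (rule sets.countable_INT) (auto intro: sets_coin_not_forces_within)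
    finally have Z: "?Z \<in> events" .
    have "prob ?Z \<le> ?c ^ n" for n
      using finite_measure_mono[of ?Z "{t \<in> space ?M. \<not> forces_within P k t n x}"]
        sets_coin_not_forces_within prob_not_forces_within[OF assms] by auto
    moreover have "(\<lambda>n. ?c ^ n) \<longlonglongrightarrow> 0"
      by (rule LIMSEQ_power_zero) (use assms in auto)
    ultimately have "prob ?Z \<le> 0"
      by (intro LIMSEQ_le_const) auto
    then show ?thesis
      using Z by (simp add: emeasure_eq_measure null_sets_def measure_le_0_iff)
  qed
  then have "(\<Union>x. {t \<in> space ?M. \<forall>n. \<not> forces_within P k t n x}) \<in> null_sets ?M"
    by (intro null_sets_UN') auto
  then show ?thesis
    by (rule AE_I') auto
qed

theorem proposition3:
  fixes i k :: nat
  assumes "i < k"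
  shows "W i k \<in> sets (completion (coin_measure (Sigma_ik i k))) \<and>
         emeasure (completion (coin_measure (Sigma_ik i k))) (W i k) = (if odd k then 0 else 1)"
proof -
  let ?M = "coin_measure (Sigma_ik i k)"
  interpret prob_space ?M
    by (rule prob_space_coin_measure[OF finite_Sigma_ik Sigma_ik_nonempty]) (use assms in simp)
  have "AE t in ?M. \<forall>P x. \<exists>n. forces_within P k t n x"
    using AE_forces_within[OF assms, of PAll] AE_forces_within[OF assms, of PEx]
    by eventually_elim (metis player.exhaust)
  then have "AE t in ?M. t \<in> W i k \<longleftrightarrow> even k"
    using AE_space by eventually_elim (auto simp: space_coin_measure intro!: mem_W_iff_even)
  moreover have "W i k \<subseteq> space ?M"
    by (auto simp: W_def space_coin_measure)
  ultimately show ?thesis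
    using completion_AE_iff_const[of "W i k" "even k"] by simp
qed

end
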